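(* Suppose that for every unit vector $\theta\in\Theta$, the random variable $x_0^\top\theta$ with $x_0\sim\mathcal D_0^X$ has a density bounded above by $\phi_u$. Then for all $\beta,\beta'>0$ and $\theta\in\Theta$, $\mathrm{TV}(\mathcal D_\beta(\theta),\mathcal D_{\beta'}(\theta))\le\phi_u|\beta-\beta'|$; i.e. the atlas is $\epsilon_{\mathrm{TV}}$-smooth with $\epsilon_{\mathrm{TV}}\le\phi_u$.
   Context: Binary strategic classification: $\Theta\subseteq\{\theta\in\mathbb R^{d}:\|\theta\|=1\}$, a threshold $T\in\mathbb R$, classifiers $f_\theta(x)=\mathbf 1\{\theta^\top x\ge T\}$. For budget $\beta>0$, an individual with features $x_0$ responds with $g_\beta(x_0,\theta)=x_0+\theta(T-x_0^\top\theta)$ if $x_0^\top\theta\in[T-\beta,T)$ and $g_\beta(x_0,\theta)=x_0$ otherwise. Given a base distribution $\mathcal D_0$ of $(x_0,y)$ with feature marginal $\mathcal D_0^X$, $(x,y)\sim\mathcal D_\beta(\theta)$ iff $(x_0,y)\sim\mathcal D_0$ and $x=g_\beta(x_0,\theta)$. $\mathrm{TV}(P,Q)=\sup_A|P(A)-Q(A)|$. *)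

theory Defs
  imports "HOL-Probability.Probability"
begin

text \<open>Best response of an individual with features x0 to classifier theta,
  threshold T and manipulation budget beta.\<close>
definition g_resp :: "real \<Rightarrow> real \<Rightarrow> 'a::euclidean_space \<Rightarrow> 'a \<Rightarrow> 'a" where
  "g_resp T \<beta> x0 \<theta> =
     (if x0 \<bullet> \<theta> \<in> {T - \<beta> ..< T} then x0 + (T - x0 \<bullet> \<theta>) *\<^sub>R \<theta> else x0)"

abbreviation data_space :: "('a::euclidean_space \<times> bool) measure" where
  "data_space \<equiv> borel \<Otimes>\<^sub>M count_space UNIV"

definition D_induced :: "real \<Rightarrow> real \<Rightarrow> ('a::euclidean_space \<times> bool) measure \<Rightarrow> 'a
      \<Rightarrow> ('a \<times> bool) measure" where
  "D_induced T \<beta> D0 \<theta> = distr D0 data_space (\<lambda>(x0, y). (g_resp T \<beta> x0 \<theta>, y))"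

definition TV :: "'b measure \<Rightarrow> 'b measure \<Rightarrow> real" where
  "TV P Q = (SUP A \<in> sets P. \<bar>measure P A - measure Q A\<bar>)"

end

theory Submission imports Defs begin

text \<open>Raising the budget from \<open>min \<beta> \<beta>'\<close> to \<open>max \<beta> \<beta>'\<close> only changes the response of
  individuals whose score \<open>x\<^sub>0 \<bullet> \<theta>\<close> lies in a band of width \<open>\<bar>\<beta> - \<beta>'\<bar>\<close> below the threshold.
  Pushing forward the same base distribution along two maps that agree off an event \<open>E\<close>
  changes the probability of any set by at most \<open>P(E)\<close>, and a score density bounded by
  \<open>\<phi>\<^sub>u\<close> gives the band probability at most \<open>\<phi>\<^sub>u \<bar>\<beta> - \<beta>'\<bar>\<close>.\<close>

lemma g_resp_measurable [measurable]:
  "(\<lambda>x. g_resp T \<beta> x \<theta>) \<in> borel_measurable (borel :: 'a::euclidean_space measure)"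
  unfolding g_resp_def by measurable

lemma g_resp_eq_outside_band:
  assumes "x \<bullet> \<theta> \<notin> {T - max \<beta> \<beta>' ..< T - min \<beta> \<beta>'}"
  shows "g_resp T \<beta> x \<theta> = g_resp T \<beta>' x \<theta>"
  using assms unfolding g_resp_def by auto

lemma (in finite_measure) measure_vimage_le_disagreement:
  assumes f: "f \<in> measurable M N" and g: "g \<in> measurable M N" and E: "E \<in> sets M"
    and agree: "\<And>x. x \<in> space M - E \<Longrightarrow> f x = g x"
    and A: "A \<in> sets N"
  shows "measure M (f -` A \<inter> space M) \<le> measure M (g -` A \<inter> space M) + measure M E"
proof -
  have "f -` A \<inter> space M \<subseteq> (g -` A \<inter> space M) \<union> E"
    using agree by auto
  then have "measure M (f -` A \<inter> space M) \<le> measure M ((g -` A \<inter> space M) \<union> E)"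
    using measurable_sets[OF g A] E by (intro finite_measure_mono) auto
  also have "\<dots> \<le> measure M (g -` A \<inter> space M) + measure M E"
    using measurable_sets[OF g A] E by (rule measure_Un_le)
  finally show ?thesis .
qed

lemma (in finite_measure) TV_distr_le_disagreement:
  assumes f: "f \<in> measurable M N" and g: "g \<in> measurable M N" and E: "E \<in> sets M"
    and agree: "\<And>x. x \<in> space M - E \<Longrightarrow> f x = g x"
  shows "TV (distr M N f) (distr M N g) \<le> measure M E"
  unfolding TV_def
proof (rule cSUP_least)
  show "sets (distr M N f) \<noteq> {}"
    using sets.empty_sets by blast
next
  fix A assume "A \<in> sets (distr M N f)"
  then have A: "A \<in> sets N" by simp
  have "measure M (f -` A \<inter> space M) \<le> measure M (g -` A \<inter> space M) + measure M E"
    by (rule measure_vimage_le_disagreement[OF f g E agree A])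
  moreover have "measure M (g -` A \<inter> space M) \<le> measure M (f -` A \<inter> space M) + measure M E"
    by (rule measure_vimage_le_disagreement[OF g f E _ A]) (use agree in metis)
  ultimately show "\<bar>measure (distr M N f) A - measure (distr M N g) A\<bar> \<le> measure M E"
    using f g A by (simp add: measure_distr abs_le_iff)
qed

lemma distributed_distrD:
  assumes "distributed (distr M N Y) P X f" and Y: "Y \<in> measurable M N"
  shows "distributed M P (\<lambda>\<omega>. X (Y \<omega>)) f"
proof -
  have X: "X \<in> measurable N P"
    using distributed_measurable[OF assms(1)] by (simp add: measurable_distr_eq1)
  then have "distr M P (\<lambda>\<omega>. X (Y \<omega>)) = distr (distr M N Y) P X"
    using Y by (simp add: distr_distr comp_def)
  then show ?thesis
    using assms X Y by (simp add: distributed_def)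
qed

lemma (in prob_space) prob_interval_le_of_bounded_density:
  assumes X: "distributed M lborel X f" and f_le: "\<And>t. f t \<le> ennreal c" and "a \<le> b"
  shows "prob {\<omega>\<in>space M. X \<omega> \<in> {a..<b}} \<le> c * (b - a)"
proof -
  have emeasure_le: "emeasure M (X -` A \<inter> space M) \<le> ennreal c * emeasure lborel A"
    if A: "A \<in> sets lborel" for A
  proof -
    have "emeasure M (X -` A \<inter> space M) = (\<integral>\<^sup>+t. f t * indicator A t \<partial>lborel)"
      using distributed_emeasure[OF X A] .
    also have "\<dots> \<le> (\<integral>\<^sup>+t. ennreal c * indicator A t \<partial>lborel)"
      by (intro nn_integral_mono) (auto simp: f_le mult_right_mono)
    also have "\<dots> = ennreal c * emeasure lborel A"
      using A by (simp add: nn_integral_cmult_indicator)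
    finally show ?thesis .
  qed
  have "c \<ge> 0"
  proof (rule ccontr)
    assume "\<not> c \<ge> 0"
    then have "ennreal c = 0" by (simp add: ennreal_eq_0_iff)
    with emeasure_le[of UNIV] show False
      using distributed_measurable[OF X] by (simp add: emeasure_space_1 measurable_space vimage_def)
  qed
  have "{\<omega>\<in>space M. X \<omega> \<in> {a..<b}} = X -` {a..<b} \<inter> space M" by auto
  then have "emeasure M {\<omega>\<in>space M. X \<omega> \<in> {a..<b}} \<le> ennreal (c * (b - a))"
    using emeasure_le[of "{a..<b}"] \<open>c \<ge> 0\<close> \<open>a \<le> b\<close> by (simp add: ennreal_mult)
  then show ?thesis
    using \<open>c \<ge> 0\<close> \<open>a \<le> b\<close> by (simp add: measure_def enn2real_leI)
qed

theorem claim3: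
  fixes D0 :: "('a::euclidean_space \<times> bool) measure"
    and \<Theta> :: "'a set" and T \<phi>u :: real
  assumes "prob_space D0"
    and "sets D0 = sets data_space"
    and "\<forall>\<theta>\<in>\<Theta>. norm \<theta> = 1"
    and "\<forall>\<theta>\<in>\<Theta>. \<exists>f. distributed (distr D0 borel fst) lborel (\<lambda>x. x \<bullet> \<theta>) f
                         \<and> (\<forall>t. f t \<le> ennreal \<phi>u)"
  shows "\<forall>\<beta> \<beta>' \<theta>. \<beta> > 0 \<longrightarrow> \<beta>' > 0 \<longrightarrow> \<theta> \<in> \<Theta> \<longrightarrow>
           TV (D_induced T \<beta> D0 \<theta>) (D_induced T \<beta>' D0 \<theta>) \<le> \<phi>u * \<bar>\<beta> - \<beta>'\<bar>"
proof (intro allI impI)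
  fix \<beta> \<beta>' :: real and \<theta> assume "\<theta> \<in> \<Theta>"
  interpret prob_space D0 by fact
  note sets_D0 = measurable_cong_sets[OF assms(2) refl]
  obtain f where marginal: "distributed (distr D0 borel fst) lborel (\<lambda>x. x \<bullet> \<theta>) f"
    and f_le: "\<forall>t. f t \<le> ennreal \<phi>u" using assms(4) \<open>\<theta> \<in> \<Theta>\<close> by blast
  have score: "distributed D0 lborel (\<lambda>\<omega>. fst \<omega> \<bullet> \<theta>) f"
    using marginal by (rule distributed_distrD) (simp add: sets_D0)
  define band where "band = {\<omega>\<in>space D0. fst \<omega> \<bullet> \<theta> \<in> {T - max \<beta> \<beta>' ..< T - min \<beta> \<beta>'}}"
  have "band \<in> sets D0"
    using measurable_sets[OF distributed_measurable[OF score], of "{T - max \<beta> \<beta>' ..< T - min \<beta> \<beta>'}"]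
    unfolding band_def by (simp add: vimage_def Int_def conj_commute)
  have "TV (D_induced T \<beta> D0 \<theta>) (D_induced T \<beta>' D0 \<theta>) \<le> prob band"
    unfolding D_induced_def
    by (rule TV_distr_le_disagreement[OF _ _ \<open>band \<in> sets D0\<close>])
       (auto simp: sets_D0 band_def split: prod.splits intro: g_resp_eq_outside_band)
  also have "\<dots> \<le> \<phi>u * ((T - min \<beta> \<beta>') - (T - max \<beta> \<beta>'))"
    unfolding band_def using f_le by (intro prob_interval_le_of_bounded_density[OF score]) auto
  also have "\<dots> = \<phi>u * \<bar>\<beta> - \<beta>'\<bar>" by (simp add: max_def min_def)
  finally show "TV (D_induced T \<beta> D0 \<theta>) (D_induced T \<beta>' D0 \<theta>) \<le> \<phi>u * \<bar>\<beta> - \<beta>'\<bar>" .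
qed

end
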